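(* Let $p$ be a prime, $n\ge 1$, and let $F\otimes_{ku_*}ku_*(\mathbb{Z}_{p^n})$ and the elements $[a,b]$ be as described in the context. For every integer $k\ge 0$, every integer $a$ and every integer $b$ with $1\le b\le (k+1)g_1$, where $g_1=p-1$, one has $$p^{n+k}[a,b]=0 \quad\text{in } F\otimes_{ku_*}ku_*(\mathbb{Z}_{p^n}).$$
   Context: Fix a prime $p$. Let $ku_*=\mathbb{Z}_{(p)}[v]$ be the $p$-local coefficient ring of connective complex $K$-theory, $v$ of degree $2$. Write $g_i=p^i-1$. For $m\ge1$ and $0\le t\le p^m-1$ put $a_{t,m}=\binom{p^m}{t+1}v^t\in ku_*$ (the coefficients of the $[p^m]$-series $[p^m](x)=\sum_t a_{t,m}x^{t+1}$). The reduced homology $ku_*(\mathbb{Z}_{p^n})$ (of $B\mathbb{Z}/p^n$) is the $ku_*$-module generated by classes $e_j$, $j\ge1$, subject to the relations $\sum_{t=0}^{p^n-1}a_{t,n}e_{j-t}=0$ for all $j\ge1$, where $e_h=0$ for $h\le 0$. Let $F=\bigoplus_{i\ge1}ku_*\alpha_i$ be the free $ku_*$-module on generators $\alpha_i$, with $\alpha_h=0$ for $h\le0$. For integers $i,j$ write $[i,j]=\alpha_i\otimes e_j\in F\otimes_{ku_*}ku_*(\mathbb{Z}_{p^n})$ (so $[i,j]=0$ if $i\le0$ or $j\le0$), and $c[i,j]=c\,\alpha_i\otimes e_j$ for $c\in ku_*$. *)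

theory Defs
  imports "HOL-Computational_Algebra.Polynomial"
begin

text \<open>The p-local integers Z_(p), as a subset of the rationals.\<close>
definition Zloc :: "nat \<Rightarrow> rat set" where
  "Zloc p = {q. coprime (snd (quotient_of q)) (int p)}"

text \<open>ku_* = Z_(p)[v], as polynomials in v with Z_(p) coefficients.\<close>
definition ku :: "nat \<Rightarrow> rat poly set" where
  "ku p = {f. \<forall>i. coeff f i \<in> Zloc p}"

definition acoef :: "nat \<Rightarrow> nat \<Rightarrow> nat \<Rightarrow> rat poly" where
  "acoef p t m = monom (of_nat ((p ^ m) choose (t + 1))) t"

text \<open>Elements of the free ku_*-module on the symbols [i,j] are represented as
  functions int \<times> int \<Rightarrow> ku_* (coefficient of [i,j]); only i,j \<ge> 1 are genuine
  generators.  The relation element for generator alpha_i and index j: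
  sum_{t=0}^{p^n-1} a_{t,n} [i, j-t], with [i,h] = 0 for h \<le> 0.\<close>
definition relvec :: "nat \<Rightarrow> nat \<Rightarrow> int \<Rightarrow> int \<Rightarrow> (int \<times> int \<Rightarrow> rat poly)" where
  "relvec p n i j = (\<lambda>(i', j'). if i' = i \<and> 1 \<le> j' \<and> 0 \<le> j - j' \<and> j - j' \<le> int (p ^ n) - 1
        then acoef p (nat (j - j')) n else 0)"

inductive_set relsub :: "nat \<Rightarrow> nat \<Rightarrow> (int \<times> int \<Rightarrow> rat poly) set" for p n where
  zero: "(\<lambda>_. 0) \<in> relsub p n"
| step: "x \<in> relsub p n \<Longrightarrow> c \<in> ku p \<Longrightarrow> 1 \<le> i \<Longrightarrow> 1 \<le> j \<Longrightarrow>
         (\<lambda>ij. x ij + c * relvec p n i j ij) \<in> relsub p n"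

definition gen :: "rat poly \<Rightarrow> int \<Rightarrow> int \<Rightarrow> (int \<times> int \<Rightarrow> rat poly)" where
  "gen c a b = (\<lambda>ij. if ij = (a, b) \<and> 1 \<le> a \<and> 1 \<le> b then c else 0)"

text \<open>c[a,b] = 0 in F \<otimes>_{ku_*} ku_*(Z_{p^n}) (the quotient of the free module by relsub).\<close>
definition vanishes :: "nat \<Rightarrow> nat \<Rightarrow> rat poly \<Rightarrow> int \<Rightarrow> int \<Rightarrow> bool" where
  "vanishes p n c a b \<longleftrightarrow> gen c a b \<in> relsub p n"

end

theory Submission
  imports Defs
begin

text \<open>Multiplying the relation for [a,b] by p^k writes p^(n+k)[a,b] as minus the sum over
  1 \<le> t < p^n of p^k binom(p^n, t+1) v^t [a, b-t]. If p^s exactly divides t+1, then p^(n-s)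
  divides the binomial coefficient, while t \<ge> p^s - 1 \<ge> s(p-1) by Bernoulli's inequality.
  So for s \<le> k the summand is a multiple of p^(n+k-s)[a, b-t] with b - t \<le> (k-s+1)(p-1),
  which vanishes by induction on b; for s > k already b - t \<le> 0.\<close>

lemma denom_quotient_of_dvd:
  fixes a b :: int
  assumes "b \<noteq> 0"
  shows "snd (quotient_of (of_int a / of_int b)) dvd b"
proof -
  obtain m d where q: "quotient_of (of_int a / of_int b) = (m, d)" by force
  have "d \<noteq> 0" using quotient_of_denom_pos[OF q] by simp
  have "(of_int a / of_int b :: rat) = of_int m / of_int d"
    using quotient_of_div[OF q] .
  then have "of_int (a * d) = (of_int (m * b) :: rat)"
    using assms \<open>d \<noteq> 0\<close> by (simp add: field_simps)
  then have "d dvd m * b" by (metis dvd_triv_right of_int_eq_iff)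
  then have "d dvd b"
    using quotient_of_coprime[OF q] by (metis coprime_commute coprime_dvd_mult_right_iff)
  then show ?thesis using q by simp
qed

lemma Zloc_iff:
  "q \<in> Zloc p \<longleftrightarrow> (\<exists>a b. b \<noteq> 0 \<and> coprime b (int p) \<and> q = of_int a / of_int b)"
proof
  assume q: "q \<in> Zloc p"
  obtain a b where ab: "quotient_of q = (a, b)" by force
  have "b \<noteq> 0" using quotient_of_denom_pos[OF ab] by simp
  moreover have "coprime b (int p)" using q ab by (simp add: Zloc_def)
  moreover have "q = of_int a / of_int b" using quotient_of_div[OF ab] .
  ultimately show "\<exists>a b. b \<noteq> 0 \<and> coprime b (int p) \<and> q = of_int a / of_int b"
    by blast
next
  assume "\<exists>a b. b \<noteq> 0 \<and> coprime b (int p) \<and> q = of_int a / of_int b"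
  then obtain a b where "b \<noteq> 0" "coprime b (int p)" "q = of_int a / of_int b" by blast
  then have "snd (quotient_of q) dvd b" using denom_quotient_of_dvd by simp
  with \<open>coprime b (int p)\<close> show "q \<in> Zloc p"
    unfolding Zloc_def by (simp add: coprime_divisors[OF _ dvd_refl])
qed

lemma Zloc_of_int: "of_int a \<in> Zloc p"
  unfolding Zloc_def by simp

lemma Zloc_add:
  assumes "q \<in> Zloc p" "r \<in> Zloc p"
  shows "q + r \<in> Zloc p"
proof -
  obtain a b c d where "b \<noteq> 0" "coprime b (int p)" "q = of_int a / of_int b"
    and "d \<noteq> 0" "coprime d (int p)" "r = of_int c / of_int d"
    using assms unfolding Zloc_iff by blast
  then have "q + r = of_int (a * d + c * b) / of_int (b * d)" "b * d \<noteq> 0"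
    "coprime (b * d) (int p)"
    by (simp_all add: field_simps)
  then show ?thesis unfolding Zloc_iff by blast
qed

lemma Zloc_mult:
  assumes "q \<in> Zloc p" "r \<in> Zloc p"
  shows "q * r \<in> Zloc p"
proof -
  obtain a b c d where "b \<noteq> 0" "coprime b (int p)" "q = of_int a / of_int b"
    and "d \<noteq> 0" "coprime d (int p)" "r = of_int c / of_int d"
    using assms unfolding Zloc_iff by blast
  then have "q * r = of_int (a * c) / of_int (b * d)" "b * d \<noteq> 0"
    "coprime (b * d) (int p)"
    by simp_all
  then show ?thesis unfolding Zloc_iff by blast
qed

lemma Zloc_sum: "(\<And>x. x \<in> A \<Longrightarrow> f x \<in> Zloc p) \<Longrightarrow> sum f A \<in> Zloc p"
  by (induction A rule: infinite_finite_induct) (simp_all add: Zloc_add Zloc_of_int[of 0, simplified])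

lemma ku_mult:
  assumes "f \<in> ku p" "g \<in> ku p"
  shows "f * g \<in> ku p"
  using assms unfolding ku_def by (simp add: coeff_mult Zloc_sum Zloc_mult)

lemma monom_of_int_in_ku: "monom (of_int a) t \<in> ku p"
  unfolding ku_def coeff_monom using Zloc_of_int[of 0] Zloc_of_int[of a] by simp

lemma const_of_nat_in_ku: "[:of_nat m:] \<in> ku p"
  using monom_of_int_in_ku[of "int m" 0] by (simp add: monom_0)

lemma relsub_add:
  assumes "x \<in> relsub p n" "y \<in> relsub p n"
  shows "(\<lambda>ij. x ij + y ij) \<in> relsub p n"
  using assms(2)
proof (induction rule: relsub.induct)
  case zero
  then show ?case using assms(1) by simp
next
  case (step y c i j)
  then have "(\<lambda>ij. (x ij + y ij) + c * relvec p n i j ij) \<in> relsub p n"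
    by (intro relsub.step)
  then show ?case by (simp add: add.assoc)
qed

lemma relsub_scale:
  assumes "x \<in> relsub p n" "d \<in> ku p"
  shows "(\<lambda>ij. d * x ij) \<in> relsub p n"
  using assms(1)
proof (induction rule: relsub.induct)
  case zero
  then show ?case by (simp add: relsub.zero)
next
  case (step x c i j)
  then have "(\<lambda>ij. d * x ij + (d * c) * relvec p n i j ij) \<in> relsub p n"
    using assms(2) by (intro relsub.step ku_mult)
  then show ?case by (simp add: algebra_simps)
qed

lemma relsub_diff:
  assumes "x \<in> relsub p n" "y \<in> relsub p n"
  shows "(\<lambda>ij. x ij - y ij) \<in> relsub p n"
  using relsub_add[OF assms(1) relsub_scale[OF assms(2) monom_of_int_in_ku[of "-1" 0]]]
  by (simp add: monom_0)

lemma relsub_sum: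
  "(\<And>t. t \<in> T \<Longrightarrow> f t \<in> relsub p n) \<Longrightarrow> (\<lambda>ij. \<Sum>t\<in>T. f t ij) \<in> relsub p n"
proof (induction T rule: infinite_finite_induct)
  case (insert t T)
  then show ?case using relsub_add[of "f t" p n] by simp
qed (simp_all add: relsub.zero)

lemma relvec_in_relsub:
  "c \<in> ku p \<Longrightarrow> 1 \<le> i \<Longrightarrow> 1 \<le> j \<Longrightarrow> (\<lambda>ij. c * relvec p n i j ij) \<in> relsub p n"
  using relsub.step[OF relsub.zero] by simp

lemma gen_eq_zero: "\<not> (1 \<le> a \<and> 1 \<le> b) \<Longrightarrow> gen c a b = (\<lambda>_. 0)"
  unfolding gen_def by auto

lemma gen_mult: "(\<lambda>ij. d * gen c a b ij) = gen (d * c) a b"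
  unfolding gen_def by auto

lemma relvec_eq_sum_gen:
  assumes "1 \<le> a"
  shows "(\<lambda>ij. c * relvec p n a b ij)
    = (\<lambda>ij. \<Sum>t\<in>{0..<p ^ n}. gen (c * acoef p t n) a (b - int t) ij)"
proof
  fix ij :: "int \<times> int"
  obtain i j where ij: "ij = (i, j)" by force
  show "c * relvec p n a b ij = (\<Sum>t\<in>{0..<p ^ n}. gen (c * acoef p t n) a (b - int t) ij)"
  proof (cases "i = a \<and> 1 \<le> j \<and> 0 \<le> b - j \<and> b - j \<le> int (p ^ n) - 1")
    case True
    have "(\<Sum>t\<in>{0..<p ^ n}. gen (c * acoef p t n) a (b - int t) ij)
        = (\<Sum>t\<in>{0..<p ^ n}. if nat (b - j) = t then c * acoef p t n else 0)"
      using True assms by (intro sum.cong) (auto simp: gen_def ij)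
    also have "\<dots> = c * acoef p (nat (b - j)) n"
      using True by (simp add: nat_less_iff)
    finally show ?thesis using True by (simp add: relvec_def ij)
  next
    case False
    then show ?thesis by (auto simp: relvec_def gen_def ij intro!: sum.neutral)
  qed
qed

lemma prime_power_dvd_binomial:
  fixes p n m :: nat
  assumes p: "prime p" and m: "0 < m" "m \<le> p ^ n"
  shows "p ^ (n - multiplicity p m) dvd (p ^ n choose m)"
proof -
  define s where "s = multiplicity p m"
  obtain w where w: "m = p ^ s * w" "\<not> p dvd w"
    using multiplicity_decompose'[of m p] m(1) p unfolding s_def by (auto simp: prime_nat_iff)
  have "p ^ s \<le> p ^ n"
    using m dvd_imp_le[OF multiplicity_dvd[of p m]] unfolding s_def by linarith
  then have "s \<le> n"
    using prime_gt_1_nat[OF p] by (rule power_le_imp_le_exp[rotated])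
  have "p ^ s * (w * (p ^ n choose m)) = p ^ s * (p ^ (n - s) * ((p ^ n - 1) choose (m - 1)))"
    using times_binomial_minus1_eq[OF m(1), of "p ^ n"] w(1) \<open>s \<le> n\<close>
    by (simp add: mult.assoc flip: power_add)
  then have "p ^ (n - s) dvd w * (p ^ n choose m)"
    using prime_gt_0_nat[OF p] by simp
  moreover have "coprime (p ^ (n - s)) w"
    using p w(2) by (simp add: prime_imp_coprime)
  ultimately show ?thesis
    unfolding s_def by (simp add: coprime_dvd_mult_right_iff)
qed

lemma one_plus_mult_le_power:
  fixes p s :: nat
  assumes "1 \<le> p"
  shows "1 + s * (p - 1) \<le> p ^ s"
proof -
  have "1 + of_nat s * of_nat (p - 1) \<le> (1 + of_nat (p - 1) :: rat) ^ s"
    by (rule Bernoulli_inequality) simp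
  also have "1 + of_nat (p - 1) = (of_nat p :: rat)"
    using assms by (simp add: of_nat_diff)
  finally have "of_nat (1 + s * (p - 1)) \<le> (of_nat (p ^ s) :: rat)"
    by (simp only: of_nat_add of_nat_mult of_nat_1 of_nat_power)
  then show ?thesis
    by (simp only: of_nat_le_iff)
qed

lemma binomial_summand_in_relsub:
  fixes p n k t :: nat and a b :: int
  assumes p: "prime p" and t: "1 \<le> t" "t < p ^ n"
    and b: "b \<le> int ((k + 1) * (p - 1))"
    and IH: "\<And>k'. b - int t \<le> int ((k' + 1) * (p - 1)) \<Longrightarrow>
      gen [:of_nat (p ^ (n + k')):] a (b - int t) \<in> relsub p n"
  shows "gen ([:of_nat (p ^ k):] * acoef p t n) a (b - int t) \<in> relsub p n"
proof -
  define s where "s = multiplicity p (t + 1)"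
  have "p ^ s \<le> t + 1"
    unfolding s_def by (rule dvd_imp_le[OF multiplicity_dvd]) simp
  moreover have "s * (p - 1) < p ^ s"
    using one_plus_mult_le_power[of p s] prime_ge_1_nat[OF p] by simp
  ultimately have s_bound: "s * (p - 1) \<le> t"
    by simp
  show ?thesis
  proof (cases "s \<le> k")
    case False
    then have "(k + 1) * (p - 1) \<le> s * (p - 1)"
      by (intro mult_right_mono) simp_all
    then have "\<not> 1 \<le> b - int t"
      using b s_bound by linarith
    then show ?thesis
      by (simp add: gen_eq_zero relsub.zero)
  next
    case True
    have "(k + 1) * (p - 1) = (k - s + 1) * (p - 1) + s * (p - 1)"
      using True by (simp flip: add_mult_distrib)
    then have "b - int t \<le> int ((k - s + 1) * (p - 1))"
      using b s_bound by linarith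
    then have G: "gen [:of_nat (p ^ (n + (k - s))):] a (b - int t) \<in> relsub p n"
      by (rule IH)
    have "p ^ s \<le> p ^ n"
      using \<open>p ^ s \<le> t + 1\<close> t(2) by simp
    then have "s \<le> n"
      using prime_gt_1_nat[OF p] by (rule power_le_imp_le_exp[rotated])
    obtain u where u: "p ^ n choose (t + 1) = p ^ (n - s) * u"
      using prime_power_dvd_binomial[OF p, of "t + 1" n] t(2) unfolding s_def by auto
    have "p ^ k * (p ^ n choose (t + 1)) = u * p ^ (n + (k - s))"
      using True \<open>s \<le> n\<close> unfolding u by (simp add: algebra_simps flip: power_add)
    then have "(of_nat (p ^ k * (p ^ n choose (t + 1))) :: rat) = of_nat (u * p ^ (n + (k - s)))"
      by (rule arg_cong)
    then have "[:of_nat (p ^ k):] * acoef p t n = monom (of_nat u) t * [:of_nat (p ^ (n + (k - s))):]"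
      by (simp add: acoef_def mult_monom flip: monom_0)
    then show ?thesis
      using relsub_scale[OF G monom_of_int_in_ku[of "int u" t]] by (simp add: gen_mult)
  qed
qed

lemma prime_power_gen_in_relsub:
  fixes p n k :: nat and a b :: int
  assumes p: "prime p" and "b \<le> int ((k + 1) * (p - 1))"
  shows "gen [:of_nat (p ^ (n + k)):] a b \<in> relsub p n"
  using assms(2)
proof (induction "nat b" arbitrary: b k rule: less_induct)
  case less
  show ?case
  proof (cases "1 \<le> a \<and> 1 \<le> b")
    case False
    then show ?thesis by (simp add: gen_eq_zero relsub.zero)
  next
    case True
    define summand where "summand t = gen ([:of_nat (p ^ k):] * acoef p t n) a (b - int t)" for t
    have "(\<lambda>ij. [:of_nat (p ^ k):] * relvec p n a b ij) \<in> relsub p n"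
      using True by (intro relvec_in_relsub const_of_nat_in_ku) simp_all
    then have relation: "(\<lambda>ij. \<Sum>t\<in>{0..<p ^ n}. summand t ij) \<in> relsub p n"
      unfolding relvec_eq_sum_gen[of a, OF conjunct1[OF True]] summand_def .
    have "summand t \<in> relsub p n" if "t \<in> {1..<p ^ n}" for t
      unfolding summand_def
    proof (rule binomial_summand_in_relsub[OF p _ _ less.prems])
      show "1 \<le> t" "t < p ^ n" using that by simp_all
      show "gen [:of_nat (p ^ (n + k')):] a (b - int t) \<in> relsub p n"
        if "b - int t \<le> int ((k' + 1) * (p - 1))" for k'
        using less.hyps[OF _ that] True \<open>1 \<le> t\<close> by simp
    qed
    then have higher: "(\<lambda>ij. \<Sum>t\<in>{1..<p ^ n}. summand t ij) \<in> relsub p n"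
      by (rule relsub_sum)
    have "(\<lambda>ij. (\<Sum>t\<in>{0..<p ^ n}. summand t ij) - (\<Sum>t\<in>{1..<p ^ n}. summand t ij)) = summand 0"
      using prime_gt_0_nat[OF p] by (simp add: sum.atLeast_Suc_lessThan)
    moreover have "summand 0 = gen [:of_nat (p ^ (n + k)):] a b"
      by (simp add: summand_def acoef_def monom_0 power_add mult.commute)
    ultimately show ?thesis
      using relsub_diff[OF relation higher] by simp
  qed
qed

theorem lemma4p1:
  fixes p n k :: nat and a b :: int
  assumes "prime p" and "1 \<le> n"
    and "1 \<le> b" and "b \<le> int ((k + 1) * (p - 1))"
  shows "vanishes p n [:of_nat (p ^ (n + k)):] a b"
  unfolding vanishes_def using prime_power_gen_in_relsub[OF assms(1,4)] .

end
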